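(* For every $n \ge 1$ and every proximity parameter $0<\epsilon<1$, there exists a non-adaptive $\epsilon$-tester with one-sided error for convexity of functions $f\colon [n]\to\mathbb{R}$, where $[n]=\{0,1,\dots,n-1\}$, whose query complexity is $O\!\left(\frac{\log(\epsilon n)}{\epsilon}\right)$.
   Context: A function $f\colon X\to\mathbb{R}$ on a finite set $X\subseteq\mathbb{R}^d$ is convex if for every finite collection $x_1,\dots,x_k\in X$ and reals $\lambda_i\ge 0$ with $\sum_i\lambda_i=1$ and $\sum_i\lambda_i x_i\in X$, one has $f(\sum_i\lambda_i x_i)\le\sum_i\lambda_i f(x_i)$. A function $g\colon X\to\mathbb{R}$ is $\epsilon$-far from convex if every convex $h\colon X\to\mathbb{R}$ differs from $g$ on at least $\epsilon|X|$ points of $X$. An $\epsilon$-tester for convexity is a randomized algorithm that queries values of an unknown $f$ and accepts with probability at least $2/3$ if $f$ is convex and rejects with probability at least $2/3$ if $f$ is $\epsilon$-far from convex; it has one-sided error if it accepts every convex function with probability $1$, and is non-adaptive if all queried points are chosen before any value is observed. The query complexity is the worst-case number of queries. *)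

theory Defs
  imports "HOL-Probability.Probability"
begin

text \<open>Domain [n] = {0,...,n-1}, viewed as a subset of the reals. A function on [n] is
  represented by f :: nat => real; only its values on {0..<n} matter.\<close>

definition convex_on_grid :: "nat \<Rightarrow> (nat \<Rightarrow> real) \<Rightarrow> bool" where
  "convex_on_grid n f \<longleftrightarrow>
     (\<forall>(k::nat) (x::nat \<Rightarrow> nat) (lam::nat \<Rightarrow> real) (m::nat).
        (\<forall>i<k. x i < n \<and> lam i \<ge> 0) \<and> (\<Sum>i<k. lam i) = 1 \<and> m < n \<and>
        (\<Sum>i<k. lam i * real (x i)) = real m
        \<longrightarrow> f m \<le> (\<Sum>i<k. lam i * f (x i)))"

definition far_from_convex :: "nat \<Rightarrow> real \<Rightarrow> (nat \<Rightarrow> real) \<Rightarrow> bool" where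
  "far_from_convex n \<epsilon> g \<longleftrightarrow>
     (\<forall>h. convex_on_grid n h \<longrightarrow> real (card {x\<in>{0..<n}. g x \<noteq> h x}) \<ge> \<epsilon> * real n)"

text \<open>A non-adaptive randomized tester: a probability distribution over pairs (Q, D) of a
  query set Q \<subseteq> [n] (chosen before any value is seen) and a decision rule D
  (True = accept) that depends only on the values of f on Q. Internal randomness of the
  decision is absorbed into the distribution.\<close>

definition accept_prob :: "(nat set \<times> ((nat \<Rightarrow> real) \<Rightarrow> bool)) pmf \<Rightarrow> (nat \<Rightarrow> real) \<Rightarrow> real" where
  "accept_prob T f = measure_pmf.prob T {(Q, D). D f}"

definition nonadaptive_tester ::
  "nat \<Rightarrow> (nat set \<times> ((nat \<Rightarrow> real) \<Rightarrow> bool)) pmf \<Rightarrow> bool" where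
  "nonadaptive_tester n T \<longleftrightarrow>
     (\<forall>(Q, D) \<in> set_pmf T. Q \<subseteq> {0..<n} \<and>
        (\<forall>f g. (\<forall>x\<in>Q. f x = g x) \<longrightarrow> D f = D g))"

definition query_complexity_le ::
  "(nat set \<times> ((nat \<Rightarrow> real) \<Rightarrow> bool)) pmf \<Rightarrow> real \<Rightarrow> bool" where
  "query_complexity_le T q \<longleftrightarrow> (\<forall>(Q, D) \<in> set_pmf T. real (card Q) \<le> q)"

definition one_sided_convexity_tester ::
  "nat \<Rightarrow> real \<Rightarrow> (nat set \<times> ((nat \<Rightarrow> real) \<Rightarrow> bool)) pmf \<Rightarrow> bool" where
  "one_sided_convexity_tester n \<epsilon> T \<longleftrightarrow>
     nonadaptive_tester n T \<and>
     (\<forall>f. convex_on_grid n f \<longrightarrow> accept_prob T f = 1) \<and>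
     (\<forall>f. far_from_convex n \<epsilon> f \<longrightarrow> accept_prob T f \<le> 1/3)"

end

(* The tester samples t = ceil(2/eps) uniform points of [n] and queries, for each sample x, the
   endpoints of the dyadic intervals of lengths 1, 2, ..., 2^K containing x, where 2^K ~ eps n,
   together with all multiples of 2^K and the neighbours (+-1) of all these points; it accepts iff
   the answers are convex. This costs O(t K) = O(log(eps n)/eps) queries and never rejects a convex f.

   Call x good if f is convex on the queries generated by x alone. Dyadic intervals are laminar, so
   two consecutive points of the union of the skeletons of all good points already lie in the skeleton
   of one good point; with the +-1 neighbours, every three consecutive points of the union of their
   query sets lie in the query set of one good point. Convexity on consecutive triples gives
   convexity, and a convex function on a subset of [n] extends to [n] (maximum of the secants through
   consecutive points). So f agrees with a convex function on all good points: if f is eps-far, at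
   most (1 - eps) n points are good, and all t samples are good with probability at most
   (1 - eps)^t <= exp (-2) < 1/3. *)

theory Submission
  imports Defs
begin

lemma dvd_less_imp_add_le:
  fixes a b k :: nat
  assumes "k dvd a" "k dvd b" "a < b"
  shows "a + k \<le> b"
proof -
  obtain p q where a: "a = k * p" and b: "b = k * q"
    using assms(1,2) unfolding dvd_def by blast
  then have "p < q" using assms(3) by (cases "k = 0") auto
  then have "k * (p + 1) \<le> k * q" by (intro mult_le_mono2) simp
  then show ?thesis by (simp add: a b algebra_simps)
qed

definition dyadic_lo :: "nat \<Rightarrow> nat \<Rightarrow> nat" where
  "dyadic_lo j y = y div 2^j * 2^j"

definition dyadic_hi :: "nat \<Rightarrow> nat \<Rightarrow> nat" where
  "dyadic_hi j y = dyadic_lo j y + 2^j"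

definition dyadic_endpoints :: "nat \<Rightarrow> nat \<Rightarrow> nat set" where
  "dyadic_endpoints K y = (\<Union>j\<le>K. {dyadic_lo j y, dyadic_hi j y})"

lemma dyadic_lo_le: "dyadic_lo j y \<le> y"
  by (simp add: dyadic_lo_def)

lemma less_dyadic_hi: "y < dyadic_hi j y"
proof -
  have "y mod 2^j < 2^j" by simp
  then show ?thesis
    using div_mult_mod_eq[of y "2^j"] unfolding dyadic_hi_def dyadic_lo_def by linarith
qed

lemma dvd_dyadic_lo: "2^j dvd dyadic_lo j y"
  by (simp add: dyadic_lo_def)

lemma dvd_dyadic_hi: "2^j dvd dyadic_hi j y"
  by (simp add: dyadic_hi_def dvd_dyadic_lo)

lemma le_dyadic_lo:
  assumes "2^j dvd m" "m \<le> y"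
  shows "m \<le> dyadic_lo j y"
proof -
  obtain c where m: "m = c * 2^j" using assms(1) by (metis dvd_def mult.commute)
  then have "c \<le> y div 2^j" using assms(2) div_le_mono[of m y "2^j"] by simp
  then show ?thesis by (simp add: dyadic_lo_def m)
qed

lemma dyadic_hi_le:
  assumes "2^j dvd m" "y < m"
  shows "dyadic_hi j y \<le> m"
  using dvd_less_imp_add_le[OF dvd_dyadic_lo assms(1)] dyadic_lo_le[of j y] assms(2)
  by (simp add: dyadic_hi_def)

lemma dyadic_lo_antimono: "i \<le> j \<Longrightarrow> dyadic_lo j y \<le> dyadic_lo i y"
  by (intro le_dyadic_lo dyadic_lo_le dvd_trans[OF le_imp_power_dvd dvd_dyadic_lo])

lemma dyadic_hi_mono: "i \<le> j \<Longrightarrow> dyadic_hi i y \<le> dyadic_hi j y"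
  by (intro dyadic_hi_le less_dyadic_hi dvd_trans[OF le_imp_power_dvd dvd_dyadic_hi])

lemma dyadic_lo_eqI:
  assumes "2^j dvd m" "m \<le> y" "y < m + 2^j"
  shows "dyadic_lo j y = m"
  using le_dyadic_lo[OF assms(1,2)] dvd_less_imp_add_le[OF assms(1) dvd_dyadic_lo, of y]
    dyadic_lo_le[of j y] assms(3)
  by linarith

lemma dyadic_lo_eq_of_endpoint_inside:
  assumes d: "d \<in> {dyadic_lo i x, dyadic_hi i x}" and M: "2^j dvd M" and "M < d" "d < M + 2^j"
  shows "dyadic_lo j x = M"
proof -
  have di: "2^i dvd d" using d dvd_dyadic_lo dvd_dyadic_hi by blast
  have "i < j"
  proof (rule ccontr)
    assume "\<not> i < j"
    then have "2^j dvd d" using di by (meson dvd_trans le_imp_power_dvd not_less)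
    then show False using dvd_less_imp_add_le[OF M _ \<open>M < d\<close>] \<open>d < M + 2^j\<close> by simp
  qed
  then have Mi: "2^i dvd M" and Mj: "2^i dvd M + 2^j"
    using M by (meson dvd_trans le_imp_power_dvd less_imp_le dvd_add dvd_refl)+
  have "M + 2^i \<le> d" "d + 2^i \<le> M + 2^j"
    using dvd_less_imp_add_le[OF Mi di \<open>M < d\<close>] dvd_less_imp_add_le[OF di Mj \<open>d < M + 2^j\<close>] .
  then have "M \<le> x" "x < M + 2^j"
    using d dyadic_lo_le[of i x] less_dyadic_hi[of x i] by (auto simp: dyadic_hi_def)
  then show ?thesis by (rule dyadic_lo_eqI[OF M])
qed

lemma dyadic_midpoint:
  assumes e: "e \<in> {dyadic_lo i y, dyadic_hi i y}" and "2^j dvd e" "\<not> 2^Suc j dvd e"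
  shows "e = dyadic_lo (Suc j) y + 2^j"
proof -
  define L where "L = dyadic_lo (Suc j) y"
  have "i \<le> j"
    using e assms(3) dvd_dyadic_lo dvd_dyadic_hi
    by (metis dvd_trans insert_iff le_imp_power_dvd not_less_eq_eq singletonD)
  then have "L \<le> e" "e \<le> L + 2^Suc j"
    using e dyadic_lo_antimono[of i "Suc j" y] dyadic_hi_mono[of i "Suc j" y]
      dyadic_lo_le[of i y] less_dyadic_hi[of y i]
    by (auto simp: L_def dyadic_hi_def)
  moreover have "2^Suc j dvd L" unfolding L_def by (rule dvd_dyadic_lo)
  ultimately have "L < e" "e < L + 2^Suc j"
    using assms(3) by (auto simp: le_less dvd_add_right_iff)
  moreover have "2^j dvd L" "2^j dvd L + 2^Suc j"
    using \<open>2^Suc j dvd L\<close> by (auto intro: dvd_trans[OF le_imp_power_dvd])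
  ultimately show ?thesis
    using dvd_less_imp_add_le[OF _ assms(2), of L] dvd_less_imp_add_le[OF assms(2), of "L + 2^Suc j"]
    by (simp add: L_def)
qed

lemma dyadic_endpoint_shared:
  assumes "d < e" and dx: "d \<in> dyadic_endpoints K x" and ey: "e \<in> dyadic_endpoints K y"
    and "d \<notin> dyadic_endpoints K y" and "\<not> 2^K dvd e"
    and gap: "dyadic_endpoints K y \<inter> {d<..<e} = {}"
  shows "e \<in> dyadic_endpoints K x"
proof -
  obtain i where i: "d \<in> {dyadic_lo i x, dyadic_hi i x}"
    using dx by (auto simp: dyadic_endpoints_def)
  obtain i' where i': "e \<in> {dyadic_lo i' y, dyadic_hi i' y}"
    using ey by (auto simp: dyadic_endpoints_def)
  (* With 2^j the exact power of 2 dividing e, e is the midpoint of the dyadic interval of length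
     2^(j+1) around y. Its left end M is an endpoint of y, hence left of d, so d lies strictly inside
     the dyadic interval [M, e) of length 2^j, which therefore contains x as well. *)
  define j where "j = multiplicity 2 e"
  have "e \<noteq> 0" using \<open>d < e\<close> by simp
  note power_dvd = power_dvd_iff_le_multiplicity[OF this, of 2]
  have j: "2^j dvd e" "\<not> 2^Suc j dvd e" "j < K"
    using power_dvd[of j] power_dvd[of "Suc j"] power_dvd[of K] \<open>\<not> 2^K dvd e\<close>
    by (auto simp: j_def)
  define M where "M = dyadic_lo (Suc j) y"
  have e_mid: "e = M + 2^j"
    unfolding M_def by (rule dyadic_midpoint[OF i' j(1,2)])
  have "M \<in> dyadic_endpoints K y"
    using \<open>j < K\<close> by (auto simp: M_def dyadic_endpoints_def Suc_le_eq)
  then have "M \<noteq> d" "\<not> (d < M \<and> M < e)"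
    using gap \<open>d \<notin> dyadic_endpoints K y\<close> by auto
  then have "M < d" using e_mid by simp
  have "2^j dvd M" by (simp add: M_def dvd_trans[OF le_imp_power_dvd dvd_dyadic_lo])
  then have "dyadic_lo j x = M"
    using dyadic_lo_eq_of_endpoint_inside[OF i] \<open>M < d\<close> \<open>d < e\<close> e_mid by blast
  then have "e = dyadic_hi j x" by (simp add: dyadic_hi_def e_mid)
  then show ?thesis using \<open>j < K\<close> by (auto simp: dyadic_endpoints_def)
qed

definition below_chord :: "(nat \<Rightarrow> real) \<Rightarrow> nat \<Rightarrow> nat \<Rightarrow> nat \<Rightarrow> bool" where
  "below_chord f a b c \<longleftrightarrow>
     (real c - real a) * f b \<le> (real c - real b) * f a + (real b - real a) * f c"

definition three_point_convex :: "(nat \<Rightarrow> real) \<Rightarrow> nat set \<Rightarrow> bool" where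
  "three_point_convex f S \<longleftrightarrow> (\<forall>a\<in>S. \<forall>b\<in>S. \<forall>c\<in>S. a < b \<longrightarrow> b < c \<longrightarrow> below_chord f a b c)"

lemma below_chord_join_left:
  assumes "a < p" "p < b" "b < c" "below_chord f a p b" "below_chord f p b c"
  shows "below_chord f a b c"
proof -
  have "0 \<le> (real c - real b) * ((real b - real p) * f a + (real p - real a) * f b - (real b - real a) * f p)"
    "0 \<le> (real b - real a) * ((real c - real b) * f p + (real b - real p) * f c - (real c - real p) * f b)"
    using assms by (simp_all add: below_chord_def)
  (* The slack of the claim, multiplied by b - p, is the sum of these two slacks. *)
  then have "0 \<le> (real b - real p) * ((real c - real b) * f a + (real b - real a) * f c - (real c - real a) * f b)"
    by (simp add: algebra_simps)
  then show ?thesis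
    using assms(2) by (simp add: below_chord_def zero_le_mult_iff)
qed

lemma below_chord_join_right:
  assumes "a < b" "b < q" "q < c" "below_chord f a b q" "below_chord f b q c"
  shows "below_chord f a b c"
proof -
  have "0 \<le> (real c - real b) * ((real q - real b) * f a + (real b - real a) * f q - (real q - real a) * f b)"
    "0 \<le> (real b - real a) * ((real c - real q) * f b + (real q - real b) * f c - (real c - real b) * f q)"
    using assms by (simp_all add: below_chord_def)
  then have "0 \<le> (real q - real b) * ((real c - real b) * f a + (real b - real a) * f c - (real c - real a) * f b)"
    by (simp add: algebra_simps)
  then show ?thesis
    using assms(2) by (simp add: below_chord_def zero_le_mult_iff)
qed

lemma three_point_convex_subset:
  "three_point_convex f S \<Longrightarrow> T \<subseteq> S \<Longrightarrow> three_point_convex f T"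
  unfolding three_point_convex_def by blast

lemma three_point_convex_cong:
  "(\<And>x. x \<in> S \<Longrightarrow> f x = g x) \<Longrightarrow> three_point_convex f S = three_point_convex g S"
  by (simp add: three_point_convex_def below_chord_def)

lemma three_point_convex_of_consecutive:
  assumes "\<And>a b c. a \<in> S \<Longrightarrow> b \<in> S \<Longrightarrow> c \<in> S \<Longrightarrow> a < b \<Longrightarrow> b < c \<Longrightarrow>
      S \<inter> {a<..<b} = {} \<Longrightarrow> S \<inter> {b<..<c} = {} \<Longrightarrow> below_chord f a b c"
  shows "three_point_convex f S"
proof -
  have "below_chord f a b c" if "a \<in> S" "b \<in> S" "c \<in> S" "a < b" "b < c" for a b c
    using that
  proof (induction "c - a" arbitrary: a b c rule: less_induct)
    case less
    show ?case
    proof (cases "S \<inter> {a<..<b} = {}")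
      case False
      then obtain p where "p \<in> S" "a < p" "p < b" by auto
      then show ?thesis
        using less by (intro below_chord_join_left[of a p b c]) (auto intro: less.hyps)
    next
      case left_gap: True
      show ?thesis
      proof (cases "S \<inter> {b<..<c} = {}")
        case False
        then obtain q where "q \<in> S" "b < q" "q < c" by auto
        then show ?thesis
          using less by (intro below_chord_join_right[of a b q c]) (auto intro: less.hyps)
      next
        case True
        then show ?thesis using left_gap less.prems assms by blast
      qed
    qed
  qed
  then show ?thesis unfolding three_point_convex_def by blast
qed

lemma convex_on_grid_below_chord:
  assumes f: "convex_on_grid n f" and "a < b" "b < c" "c < n"
  shows "below_chord f a b c"
proof -
  define x where "x i = (if i = 0 then a else c)" for i :: nat
  define lam where "lam i = (if i = 0 then real c - real b else real b - real a) / (real c - real a)"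
    for i :: nat
  have sum2: "(\<Sum>i<2. g i) = g 0 + g 1" for g :: "nat \<Rightarrow> real"
    by (simp add: numeral_2_eq_2)
  have ca: "real c - real a > 0" using assms by simp
  have "(\<forall>i<2. x i < n \<and> 0 \<le> lam i) \<and> (\<Sum>i<2. lam i) = 1 \<and> b < n \<and>
      (\<Sum>i<2. lam i * real (x i)) = real b"
  proof (intro conjI)
    show "\<forall>i<2. x i < n \<and> 0 \<le> lam i"
      using assms by (auto simp: lam_def x_def less_2_cases_iff)
    show "(\<Sum>i<2. lam i) = 1"
      using ca by (simp add: sum2 lam_def divide_simps)
    show "(\<Sum>i<2. lam i * real (x i)) = real b"
      using ca by (simp add: sum2 lam_def x_def divide_simps) (simp add: algebra_simps)
  qed (use assms in simp)
  then have "f b \<le> (\<Sum>i<2. lam i * f (x i))"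
    using f unfolding convex_on_grid_def by blast
  also have "\<dots> = ((real c - real b) * f a + (real b - real a) * f c) / (real c - real a)"
    by (simp add: sum2 lam_def x_def add_divide_distrib)
  finally show ?thesis
    using ca by (simp add: below_chord_def pos_le_divide_eq mult.commute)
qed

lemma convex_on_grid_three_point_convex:
  "convex_on_grid n f \<Longrightarrow> S \<subseteq> {..<n} \<Longrightarrow> three_point_convex f S"
  unfolding three_point_convex_def by (blast intro: convex_on_grid_below_chord)

lemma convex_on_grid_Max_affine:
  assumes "finite P" "P \<noteq> {}" and affine: "\<And>p. p \<in> P \<Longrightarrow> \<exists>\<alpha> \<beta>. \<forall>y. L p y = \<alpha> + \<beta> * y"
  shows "convex_on_grid n (\<lambda>m. MAX p\<in>P. L p (real m))"
  unfolding convex_on_grid_def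
proof (intro allI impI, elim conjE)
  fix k m :: nat and x :: "nat \<Rightarrow> nat" and lam :: "nat \<Rightarrow> real"
  assume lam: "\<forall>i<k. x i < n \<and> 0 \<le> lam i" "(\<Sum>i<k. lam i) = 1"
    and m: "(\<Sum>i<k. lam i * real (x i)) = real m"
  have "(MAX p\<in>P. L p (real m)) \<in> (\<lambda>p. L p (real m)) ` P"
    using assms(1,2) by (intro Max_in) auto
  then obtain p where p: "p \<in> P" "(MAX p\<in>P. L p (real m)) = L p (real m)"
    by auto
  obtain \<alpha> \<beta> where L: "\<And>y. L p y = \<alpha> + \<beta> * y" using affine[OF p(1)] by blast
  have "(\<Sum>i<k. lam i * L p (real (x i))) =
      \<alpha> * (\<Sum>i<k. lam i) + \<beta> * (\<Sum>i<k. lam i * real (x i))"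
    by (simp add: L sum.distrib sum_distrib_left algebra_simps)
  then have "L p (real m) = (\<Sum>i<k. lam i * L p (real (x i)))"
    by (simp add: L lam(2) m)
  also have "\<dots> \<le> (\<Sum>i<k. lam i * (MAX p\<in>P. L p (real (x i))))"
    using lam(1) assms(1) p(1) by (intro sum_mono mult_left_mono) auto
  finally show "(MAX p\<in>P. L p (real m)) \<le> (\<Sum>i<k. lam i * (MAX p\<in>P. L p (real (x i))))"
    using p(2) by simp
qed

definition secant :: "(nat \<Rightarrow> real) \<Rightarrow> nat \<Rightarrow> nat \<Rightarrow> real \<Rightarrow> real" where
  "secant f a b y = f a + (f b - f a) / (real b - real a) * (y - real a)"

lemma secant_affine: "\<exists>\<alpha> \<beta>. \<forall>y. secant f a b y = \<alpha> + \<beta> * y"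
proof -
  define \<beta> where "\<beta> = (f b - f a) / (real b - real a)"
  have "secant f a b y = (f a - \<beta> * real a) + \<beta> * y" for y
    by (simp add: secant_def \<beta>_def[symmetric] algebra_simps)
  then show ?thesis by blast
qed

lemma secant_le_of_three_point_convex:
  assumes cv: "three_point_convex f S" and S: "a \<in> S" "b \<in> S" "s \<in> S" "a < b"
    and gap: "S \<inter> {a<..<b} = {}"
  shows "secant f a b (real s) \<le> f s"
proof -
  have ba: "real b - real a > 0" using \<open>a < b\<close> by simp
  have "\<not> (a < s \<and> s < b)" using gap \<open>s \<in> S\<close> by auto
  then consider "s < a" | "s = a" | "s = b" | "b < s" by linarith
  then show ?thesis
  proof cases
    case 1
    then have "below_chord f s a b" using cv S unfolding three_point_convex_def by blast
    then show ?thesis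
      using ba by (simp add: secant_def below_chord_def field_simps)
  next
    case 4
    then have "below_chord f a b s" using cv S unfolding three_point_convex_def by blast
    then show ?thesis
      using ba by (simp add: secant_def below_chord_def field_simps)
  qed (use ba in \<open>simp_all add: secant_def\<close>)
qed

lemma finite_consecutive_above:
  fixes S :: "'a::linorder set"
  assumes "finite S" "t \<in> S" "b < t"
  obtains e where "e \<in> S" "b < e" "S \<inter> {b<..<e} = {}"
proof
  let ?A = "{c\<in>S. b < c}"
  have "Min ?A \<in> ?A" using assms by (intro Min_in) auto
  then show "Min ?A \<in> S" "b < Min ?A" by auto
  have "Min ?A \<le> c" if "c \<in> S" "b < c" for c using assms(1) that by (intro Min_le) auto
  then show "S \<inter> {b<..<Min ?A} = {}" by force
qed

lemma finite_consecutive_below: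
  fixes S :: "'a::linorder set"
  assumes "finite S" "t \<in> S" "t < b"
  obtains d where "d \<in> S" "d < b" "S \<inter> {d<..<b} = {}"
proof
  let ?A = "{c\<in>S. c < b}"
  have "Max ?A \<in> ?A" using assms by (intro Max_in) auto
  then show "Max ?A \<in> S" "Max ?A < b" by auto
  have "c \<le> Max ?A" if "c \<in> S" "c < b" for c using assms(1) that by (intro Max_ge) auto
  then show "S \<inter> {Max ?A<..<b} = {}" by force
qed

lemma finite_enclosing_consecutive:
  fixes V :: "'a::linorder set"
  assumes "finite V" "t \<in> V" "t \<le> b" "t' \<in> V" "b \<le> t'"
  obtains d e where "d \<in> V" "e \<in> V" "d \<le> b" "b \<le> e" "V \<inter> {d<..<e} = {}"
proof (cases "b \<in> V")
  case True
  then show ?thesis by (intro that[of b b]) auto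
next
  case False
  then have "t < b" "b < t'" using assms by (auto simp: le_less)
  obtain d where "d \<in> V" "d < b" "V \<inter> {d<..<b} = {}"
    using finite_consecutive_below[OF assms(1,2) \<open>t < b\<close>] .
  obtain e where "e \<in> V" "b < e" "V \<inter> {b<..<e} = {}"
    using finite_consecutive_above[OF assms(1,4) \<open>b < t'\<close>] .
  have "V \<inter> {d<..<e} = {}"
  proof (intro equals0I)
    fix v assume "v \<in> V \<inter> {d<..<e}"
    then show False
      using False \<open>V \<inter> {d<..<b} = {}\<close> \<open>V \<inter> {b<..<e} = {}\<close>
      by (cases v b rule: linorder_cases) auto
  qed
  then show ?thesis using \<open>d \<in> V\<close> \<open>e \<in> V\<close> \<open>d < b\<close> \<open>b < e\<close> by (intro that[of d e]) auto
qed

definition consecutive_pairs :: "'a::linorder set \<Rightarrow> ('a \<times> 'a) set" where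
  "consecutive_pairs S = {(a, b). a \<in> S \<and> b \<in> S \<and> a < b \<and> S \<inter> {a<..<b} = {}}"

lemma finite_consecutive_pairs: "finite S \<Longrightarrow> finite (consecutive_pairs S)"
  unfolding consecutive_pairs_def by (rule finite_subset[of _ "S \<times> S"]) auto

lemma consecutive_pair_at:
  assumes "finite S" "a0 \<in> S" "b0 \<in> S" "a0 < b0" "s \<in> S"
  obtains a b where "(a, b) \<in> consecutive_pairs S" "s = a \<or> s = b"
proof (cases "s < b0")
  case True
  then obtain e where "e \<in> S" "s < e" "S \<inter> {s<..<e} = {}"
    using finite_consecutive_above[OF assms(1,3)] by blast
  then show ?thesis using assms(5) by (intro that[of s e]) (auto simp: consecutive_pairs_def)
next
  case False
  then have "a0 < s" using assms(4) by simp
  then obtain d where "d \<in> S" "d < s" "S \<inter> {d<..<s} = {}"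
    using finite_consecutive_below[OF assms(1,2)] by blast
  then show ?thesis using assms(5) by (intro that[of d s]) (auto simp: consecutive_pairs_def)
qed

lemma convex_on_grid_const: "convex_on_grid n (\<lambda>_. c)"
proof -
  have "convex_on_grid n (\<lambda>m. MAX p\<in>{()}. c + 0 * real m)"
    by (rule convex_on_grid_Max_affine) (simp, simp, blast)
  then show ?thesis by simp
qed

lemma three_point_convex_extends:
  assumes cv: "three_point_convex f S" and S: "S \<subseteq> {..<n}"
  shows "\<exists>h. convex_on_grid n h \<and> (\<forall>s\<in>S. h s = f s)"
proof (cases "\<exists>a\<in>S. \<exists>b\<in>S. a < b")
  case False
  have "S \<subseteq> {s0}" if "s0 \<in> S" for s0
  proof
    fix s assume "s \<in> S"
    with that False have "\<not> s < s0" "\<not> s0 < s" by blast+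
    then show "s \<in> {s0}" by simp
  qed
  then obtain s0 where "S \<subseteq> {s0}" by (cases "S = {}") auto
  then show ?thesis using convex_on_grid_const[of n "f s0"] by auto
next
  case True
  then obtain a0 b0 where ab0: "a0 \<in> S" "b0 \<in> S" "a0 < b0" by blast
  have "finite S" using S finite_subset by blast
  define P where "P = consecutive_pairs S"
  define h where "h m = (MAX p\<in>P. secant f (fst p) (snd p) (real m))" for m
  have "finite P" unfolding P_def using \<open>finite S\<close> by (rule finite_consecutive_pairs)
  have "P \<noteq> {}"
    using consecutive_pair_at[OF \<open>finite S\<close> ab0 ab0(1)] unfolding P_def by blast
  have "convex_on_grid n h"
    unfolding h_def using \<open>finite P\<close> \<open>P \<noteq> {}\<close> secant_affine by (rule convex_on_grid_Max_affine)
  moreover have "h s = f s" if s: "s \<in> S" for s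
  proof (rule antisym)
    have "\<forall>(a, b)\<in>P. secant f a b (real s) \<le> f s"
      by (auto simp: P_def consecutive_pairs_def intro: secant_le_of_three_point_convex[OF cv _ _ s])
    then show "h s \<le> f s"
      unfolding h_def using \<open>finite P\<close> \<open>P \<noteq> {}\<close> by (simp add: Max_le_iff case_prod_beta)
    obtain a b where "(a, b) \<in> P" "s = a \<or> s = b"
      using consecutive_pair_at[OF \<open>finite S\<close> ab0 s] unfolding P_def .
    moreover from this have "a < b" by (simp add: P_def consecutive_pairs_def)
    ultimately have "f s \<in> (\<lambda>p. secant f (fst p) (snd p) (real s)) ` P"
      by (force simp: secant_def)
    then show "f s \<le> h s"
      unfolding h_def using \<open>finite P\<close> by (intro Max_ge) auto
  qed
  ultimately show ?thesis by blast
qed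

(* Contains 0 and n - 1, so every point of [n] lies between two consecutive points of a skeleton. *)
definition coarse_grid :: "nat \<Rightarrow> nat \<Rightarrow> nat set" where
  "coarse_grid n K = {v. v < n \<and> 2^K dvd v} \<union> {n - 1}"

definition skeleton :: "nat \<Rightarrow> nat \<Rightarrow> nat set \<Rightarrow> nat set" where
  "skeleton n K X = coarse_grid n K \<union> (\<Union>x\<in>X. dyadic_endpoints K x \<inter> {..<n})"

definition neighbourhood :: "nat \<Rightarrow> nat set \<Rightarrow> nat set" where
  "neighbourhood n A = {u. u < n \<and> (\<exists>a\<in>A. u = a \<or> u = a + 1 \<or> u + 1 = a)}"

definition query_set :: "nat \<Rightarrow> nat \<Rightarrow> nat set \<Rightarrow> nat set" where
  "query_set n K X = neighbourhood n (skeleton n K X)"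

lemma skeleton_mono: "X \<subseteq> Y \<Longrightarrow> skeleton n K X \<subseteq> skeleton n K Y"
  unfolding skeleton_def by blast

lemma skeleton_subset: "1 \<le> n \<Longrightarrow> skeleton n K X \<subseteq> {..<n}"
  unfolding skeleton_def coarse_grid_def by auto

lemma skeleton_eq_UN: "X \<noteq> {} \<Longrightarrow> skeleton n K X = (\<Union>x\<in>X. skeleton n K {x})"
  unfolding skeleton_def by blast

lemma neighbourhood_mono: "A \<subseteq> B \<Longrightarrow> neighbourhood n A \<subseteq> neighbourhood n B"
  unfolding neighbourhood_def by blast

lemma neighbourhood_subset: "neighbourhood n A \<subseteq> {..<n}"
  unfolding neighbourhood_def by blast

lemma self_mem_dyadic_endpoints: "y \<in> dyadic_endpoints K y"
  unfolding dyadic_endpoints_def by (rule UN_I[of 0]) (simp_all add: dyadic_lo_def)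

lemma query_set_mono: "X \<subseteq> Y \<Longrightarrow> query_set n K X \<subseteq> query_set n K Y"
  unfolding query_set_def by (intro neighbourhood_mono skeleton_mono)

lemma query_set_subset: "query_set n K X \<subseteq> {..<n}"
  unfolding query_set_def by (rule neighbourhood_subset)

lemma subset_query_set: "X \<subseteq> {..<n} \<Longrightarrow> X \<subseteq> query_set n K X"
  unfolding query_set_def neighbourhood_def skeleton_def using self_mem_dyadic_endpoints by blast

lemma skeleton_consecutive_pair:
  assumes "X \<noteq> {}" "d \<le> e" "d \<in> skeleton n K X" "e \<in> skeleton n K X"
    and gap: "skeleton n K X \<inter> {d<..<e} = {}"
  shows "\<exists>x\<in>X. {d, e} \<subseteq> skeleton n K {x}"
proof (rule ccontr)
  assume none: "\<not> ?thesis"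
  obtain x where x: "x \<in> X" "d \<in> skeleton n K {x}"
    using assms(3) unfolding skeleton_eq_UN[OF assms(1)] by blast
  obtain y where y: "y \<in> X" "e \<in> skeleton n K {y}"
    using assms(4) unfolding skeleton_eq_UN[OF assms(1)] by blast
  have "e \<notin> skeleton n K {x}" "d \<notin> skeleton n K {y}"
    using none x y by auto
  then have dx: "d \<in> dyadic_endpoints K x" and ey: "e \<in> dyadic_endpoints K y" "e < n"
    and e_coarse: "\<not> 2^K dvd e" and dy: "d \<notin> dyadic_endpoints K y" and "d \<noteq> e"
    using x(2) y(2) unfolding skeleton_def coarse_grid_def by auto
  have "dyadic_endpoints K y \<inter> {d<..<e} = {}"
  proof (intro equals0I)
    fix v assume v: "v \<in> dyadic_endpoints K y \<inter> {d<..<e}"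
    then have "v \<in> skeleton n K X" using y(1) \<open>e < n\<close> unfolding skeleton_def by auto
    then show False using gap v by blast
  qed
  moreover have "d < e" using \<open>d \<le> e\<close> \<open>d \<noteq> e\<close> by simp
  ultimately have "e \<in> dyadic_endpoints K x"
    using dyadic_endpoint_shared[OF _ dx ey(1) dy e_coarse] by blast
  then show False using \<open>e \<notin> skeleton n K {x}\<close> \<open>e < n\<close> by (simp add: skeleton_def)
qed

lemma neighbourhood_consecutive_pair:
  assumes "V \<inter> {d<..<e} = {}" "u \<in> neighbourhood n V" "d \<le> u + 1" "u \<le> e + 1"
  shows "u \<in> neighbourhood n {d, e}"
proof -
  obtain w where w: "w \<in> V" "u = w \<or> u = w + 1 \<or> u + 1 = w" and "u < n"
    using assms(2) unfolding neighbourhood_def by blast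
  have "w \<le> d \<or> e \<le> w" using assms(1) w(1) by fastforce
  then have "u = d \<or> u = d + 1 \<or> u + 1 = d \<or> u = e \<or> u = e + 1 \<or> u + 1 = e"
    using w(2) assms(3,4) by linarith
  then show ?thesis using \<open>u < n\<close> unfolding neighbourhood_def by blast
qed

lemma neighbourhood_gap_left:
  assumes "d \<in> V" "d \<le> b" "b < n" "a < b" "neighbourhood n V \<inter> {a<..<b} = {}"
  shows "d \<le> a + 1"
proof (cases "d = b")
  case True
  then have "b - 1 \<in> neighbourhood n V"
    using assms(1,3,4) unfolding neighbourhood_def by force
  then show ?thesis using assms(4,5) True by fastforce
next
  case False
  have "d \<in> neighbourhood n V" using assms(1-3) unfolding neighbourhood_def by force
  then show ?thesis using assms(2,5) False by fastforce
qed

lemma neighbourhood_gap_right: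
  assumes "e \<in> V" "b \<le> e" "c < n" "b < c" "neighbourhood n V \<inter> {b<..<c} = {}"
  shows "c \<le> e + 1"
proof (rule ccontr)
  assume "\<not> c \<le> e + 1"
  then have "e + 1 < c" by simp
  then have "e + 1 < n" using assms(3) by simp
  then have "e + 1 \<in> neighbourhood n V"
    using assms(1) unfolding neighbourhood_def by blast
  moreover have "b < e + 1" using assms(2) by simp
  ultimately have "e + 1 \<in> neighbourhood n V \<inter> {b<..<c}" using \<open>e + 1 < c\<close> by simp
  then show False using assms(5) by simp
qed

lemma neighbourhood_consecutive_triple:
  assumes V: "finite V" "0 \<in> V" "n - 1 \<in> V"
    and abc: "a \<in> neighbourhood n V" "b \<in> neighbourhood n V" "c \<in> neighbourhood n V" "a < b" "b < c"
    and gap_ab: "neighbourhood n V \<inter> {a<..<b} = {}"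
    and gap_bc: "neighbourhood n V \<inter> {b<..<c} = {}"
  shows "\<exists>d e. d \<le> e \<and> d \<in> V \<and> e \<in> V \<and> V \<inter> {d<..<e} = {} \<and>
    {a, b, c} \<subseteq> neighbourhood n {d, e}"
proof -
  have "b < n" "c < n" using abc(2,3) unfolding neighbourhood_def by blast+
  then have "b \<le> n - 1" by simp
  then obtain d e where de: "d \<in> V" "e \<in> V" "d \<le> b" "b \<le> e" and gap: "V \<inter> {d<..<e} = {}"
    by (rule finite_enclosing_consecutive[OF V(1,2) le0 V(3)])
  have "d \<le> a + 1" "c \<le> e + 1"
    using neighbourhood_gap_left[OF de(1,3) \<open>b < n\<close> abc(4) gap_ab]
      neighbourhood_gap_right[OF de(2,4) \<open>c < n\<close> abc(5) gap_bc] .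
  then have "{a, b, c} \<subseteq> neighbourhood n {d, e}"
    using abc de(3,4) by (auto intro!: neighbourhood_consecutive_pair[OF gap])
  then show ?thesis using de gap by (intro exI[of _ d] exI[of _ e]) simp
qed

lemma three_point_convex_query_set_union:
  assumes "1 \<le> n" "X \<noteq> {}"
    and local: "\<And>x. x \<in> X \<Longrightarrow> three_point_convex f (query_set n K {x})"
  shows "three_point_convex f (query_set n K X)"
  unfolding query_set_def
proof (rule three_point_convex_of_consecutive)
  fix a b c
  assume "a \<in> neighbourhood n (skeleton n K X)" "b \<in> neighbourhood n (skeleton n K X)"
    "c \<in> neighbourhood n (skeleton n K X)" "a < b" "b < c"
    "neighbourhood n (skeleton n K X) \<inter> {a<..<b} = {}"
    "neighbourhood n (skeleton n K X) \<inter> {b<..<c} = {}"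
  moreover have "finite (skeleton n K X)"
    using skeleton_subset[OF assms(1)] finite_subset by blast
  moreover have "0 \<in> skeleton n K X" "n - 1 \<in> skeleton n K X"
    using assms(1) by (auto simp: skeleton_def coarse_grid_def)
  ultimately obtain d e where de: "d \<le> e" "d \<in> skeleton n K X" "e \<in> skeleton n K X"
    "skeleton n K X \<inter> {d<..<e} = {}" and abc: "{a, b, c} \<subseteq> neighbourhood n {d, e}"
    using neighbourhood_consecutive_triple by metis
  obtain x where "x \<in> X" "{d, e} \<subseteq> skeleton n K {x}"
    using skeleton_consecutive_pair[OF assms(2) de] by blast
  then have "{a, b, c} \<subseteq> neighbourhood n (skeleton n K {x})"
    using abc neighbourhood_mono by blast
  then show "below_chord f a b c"
    using local[OF \<open>x \<in> X\<close>] \<open>a < b\<close> \<open>b < c\<close> unfolding three_point_convex_def query_set_def by blast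
qed

lemma card_agreement_le_of_far:
  assumes "far_from_convex n \<epsilon> f" "convex_on_grid n h" "G \<subseteq> {..<n}" "\<forall>x\<in>G. f x = h x"
  shows "real (card G) \<le> (1 - \<epsilon>) * real n"
proof -
  have "{x\<in>{0..<n}. f x \<noteq> h x} \<subseteq> {..<n} - G" using assms(4) by auto
  then have "card {x\<in>{0..<n}. f x \<noteq> h x} \<le> n - card G"
    using card_mono[of "{..<n} - G"] card_Diff_subset[OF finite_subset[OF assms(3)] assms(3)] by simp
  moreover have "\<epsilon> * real n \<le> real (card {x\<in>{0..<n}. f x \<noteq> h x})"
    using assms(1,2) unfolding far_from_convex_def by blast
  moreover have "card G \<le> n" using card_mono[OF _ assms(3)] by simp
  ultimately show ?thesis by (simp add: of_nat_diff algebra_simps)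
qed

lemma card_locally_convex_points_le:
  assumes "1 \<le> n" "far_from_convex n \<epsilon> f"
  shows "real (card {x\<in>{..<n}. three_point_convex f (query_set n K {x})}) \<le> (1 - \<epsilon>) * real n"
proof -
  define G where "G = {x\<in>{..<n}. three_point_convex f (query_set n K {x})}"
  have "G \<subseteq> {..<n}" unfolding G_def by blast
  have "\<exists>h. convex_on_grid n h \<and> (\<forall>x\<in>G. f x = h x)"
  proof (cases "G = {}")
    case True
    then show ?thesis using convex_on_grid_const by blast
  next
    case False
    have "three_point_convex f (query_set n K G)"
      using assms(1) False by (rule three_point_convex_query_set_union) (simp add: G_def)
    then obtain h where "convex_on_grid n h" "\<forall>s\<in>query_set n K G. h s = f s"
      using three_point_convex_extends query_set_subset by metis
    then show ?thesis using subset_query_set[OF \<open>G \<subseteq> {..<n}\<close>] by (metis subsetD)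
  qed
  then show ?thesis
    using card_agreement_le_of_far[OF assms(2) _ \<open>G \<subseteq> {..<n}\<close>] unfolding G_def by blast
qed

definition samples :: "nat \<Rightarrow> nat \<Rightarrow> (nat \<Rightarrow> nat) set" where
  "samples n t = PiE {..<t} (\<lambda>_. {..<n})"

definition convexity_tester :: "nat \<Rightarrow> nat \<Rightarrow> nat \<Rightarrow> (nat set \<times> ((nat \<Rightarrow> real) \<Rightarrow> bool)) pmf" where
  "convexity_tester n K t =
     map_pmf (\<lambda>xs. (query_set n K (xs ` {..<t}), \<lambda>f. three_point_convex f (query_set n K (xs ` {..<t}))))
       (pmf_of_set (samples n t))"

lemma finite_samples: "finite (samples n t)"
  unfolding samples_def by (intro finite_PiE) auto

lemma samples_nonempty: "1 \<le> n \<Longrightarrow> samples n t \<noteq> {}"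
  unfolding samples_def PiE_eq_empty_iff by (auto simp: lessThan_empty_iff)

lemma card_samples: "card (samples n t) = n ^ t"
  unfolding samples_def by (simp add: card_PiE)

lemma set_pmf_convexity_tester:
  "1 \<le> n \<Longrightarrow> set_pmf (convexity_tester n K t) =
     (\<lambda>xs. (query_set n K (xs ` {..<t}), \<lambda>f. three_point_convex f (query_set n K (xs ` {..<t}))))
       ` samples n t"
  unfolding convexity_tester_def using finite_samples samples_nonempty by simp

lemma accept_prob_convexity_tester:
  assumes "1 \<le> n"
  shows "accept_prob (convexity_tester n K t) f =
    real (card {xs\<in>samples n t. three_point_convex f (query_set n K (xs ` {..<t}))}) / real n ^ t"
proof -
  have "accept_prob (convexity_tester n K t) f =
      measure (pmf_of_set (samples n t)) {xs. three_point_convex f (query_set n K (xs ` {..<t}))}"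
    unfolding accept_prob_def convexity_tester_def by (simp add: vimage_def)
  also have "\<dots> = real (card {xs\<in>samples n t. three_point_convex f (query_set n K (xs ` {..<t}))}) / real n ^ t"
    using samples_nonempty[OF assms] finite_samples
    by (simp add: measure_pmf_of_set card_samples Int_def conj_commute)
  finally show ?thesis .
qed

lemma nonadaptive_convexity_tester:
  assumes "1 \<le> n"
  shows "nonadaptive_tester n (convexity_tester n K t)"
proof -
  have "query_set n K X \<subseteq> {0..<n}" for X
    by (simp add: atLeast0LessThan query_set_subset)
  moreover have "three_point_convex f Q = three_point_convex g Q" if "\<forall>x\<in>Q. f x = g x" for f g Q
    using that by (intro three_point_convex_cong) blast
  ultimately show ?thesis
    unfolding nonadaptive_tester_def set_pmf_convexity_tester[OF assms] by blast
qed

lemma convexity_tester_accepts_convex: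
  assumes "1 \<le> n" "convex_on_grid n f"
  shows "accept_prob (convexity_tester n K t) f = 1"
proof -
  have "{xs\<in>samples n t. three_point_convex f (query_set n K (xs ` {..<t}))} = samples n t"
    using convex_on_grid_three_point_convex[OF assms(2) query_set_subset] by auto
  then show ?thesis
    using assms(1) by (simp add: accept_prob_convexity_tester card_samples)
qed

lemma one_minus_power_le_third:
  fixes \<epsilon> :: real
  assumes "0 \<le> \<epsilon>" "\<epsilon> \<le> 1" "2 \<le> \<epsilon> * real t"
  shows "(1 - \<epsilon>) ^ t \<le> 1/3"
proof -
  have "(1 - \<epsilon>) ^ t \<le> exp (- \<epsilon>) ^ t"
    using assms(2) exp_ge_add_one_self[of "- \<epsilon>"] by (intro power_mono) auto
  also have "\<dots> = exp (- (\<epsilon> * real t))" by (simp add: exp_of_nat_mult[symmetric] mult.commute)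
  also have "\<dots> \<le> exp (- 2)" using assms(3) by simp
  also have "\<dots> \<le> 1/3"
    using exp_ge_add_one_self[of 2] by (simp add: exp_minus field_simps)
  finally show ?thesis .
qed

lemma accepted_samples_subset:
  "{xs\<in>samples n t. three_point_convex f (query_set n K (xs ` {..<t}))}
    \<subseteq> PiE {..<t} (\<lambda>_. {x\<in>{..<n}. three_point_convex f (query_set n K {x})})"
proof (intro subsetI, elim CollectE conjE)
  fix xs assume xs: "xs \<in> samples n t" "three_point_convex f (query_set n K (xs ` {..<t}))"
  show "xs \<in> PiE {..<t} (\<lambda>_. {x\<in>{..<n}. three_point_convex f (query_set n K {x})})"
  proof (rule PiE_I)
    fix i assume "i \<in> {..<t}"
    then have "{xs i} \<subseteq> xs ` {..<t}" "xs i < n" using xs(1) by (auto simp: samples_def)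
    then show "xs i \<in> {x\<in>{..<n}. three_point_convex f (query_set n K {x})}"
      using three_point_convex_subset[OF xs(2) query_set_mono] by simp
  next
    fix i assume "i \<notin> {..<t}"
    then show "xs i = undefined" using xs(1) by (auto simp: samples_def)
  qed
qed

lemma convexity_tester_rejects_far:
  assumes n: "1 \<le> n" and "0 < \<epsilon>" "2 \<le> \<epsilon> * real t" and far: "far_from_convex n \<epsilon> f"
  shows "accept_prob (convexity_tester n K t) f \<le> 1/3"
proof -
  define G where "G = {x\<in>{..<n}. three_point_convex f (query_set n K {x})}"
  have G: "real (card G) \<le> (1 - \<epsilon>) * real n"
    unfolding G_def by (rule card_locally_convex_points_le[OF n far])
  have "{xs\<in>samples n t. three_point_convex f (query_set n K (xs ` {..<t}))} \<subseteq> PiE {..<t} (\<lambda>_. G)"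
    unfolding G_def by (rule accepted_samples_subset)
  then have "card {xs\<in>samples n t. three_point_convex f (query_set n K (xs ` {..<t}))}
      \<le> card (PiE {..<t} (\<lambda>_. G))"
    by (intro card_mono finite_PiE) (simp_all add: G_def)
  also have "\<dots> = card G ^ t" by (simp add: card_PiE)
  finally have accepted: "real (card {xs\<in>samples n t. three_point_convex f (query_set n K (xs ` {..<t}))})
      \<le> real (card G) ^ t"
    by (simp flip: of_nat_power)
  have "0 \<le> (1 - \<epsilon>) * real n" using G of_nat_0_le_iff[of "card G"] by linarith
  then have "\<epsilon> \<le> 1" using n by (simp add: zero_le_mult_iff)
  have "accept_prob (convexity_tester n K t) f \<le> real (card G) ^ t / real n ^ t"
    unfolding accept_prob_convexity_tester[OF n] using accepted by (simp add: divide_right_mono)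
  also have "\<dots> = (real (card G) / real n) ^ t" by (simp add: power_divide)
  also have "\<dots> \<le> (1 - \<epsilon>) ^ t"
    using G n by (intro power_mono) (simp_all add: divide_le_eq)
  also have "\<dots> \<le> 1/3"
    using \<open>0 < \<epsilon>\<close> \<open>\<epsilon> \<le> 1\<close> \<open>2 \<le> \<epsilon> * real t\<close> by (intro one_minus_power_le_third) simp_all
  finally show ?thesis .
qed

lemma one_sided_convexity_tester_convexity_tester:
  assumes "1 \<le> n" "0 < \<epsilon>" "2 \<le> \<epsilon> * real t"
  shows "one_sided_convexity_tester n \<epsilon> (convexity_tester n K t)"
  unfolding one_sided_convexity_tester_def
  using assms nonadaptive_convexity_tester convexity_tester_accepts_convex convexity_tester_rejects_far
  by blast

lemma card_neighbourhood_le: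
  assumes "finite A"
  shows "card (neighbourhood n A) \<le> 3 * card A"
proof -
  have "card (neighbourhood n A) \<le> card (\<Union>a\<in>A. {a, a + 1, a - 1})"
    using assms by (intro card_mono) (auto simp: neighbourhood_def)
  also have "\<dots> \<le> (\<Sum>a\<in>A. card {a, a + 1, a - 1})" by (rule card_UN_le[OF assms])
  also have "\<dots> \<le> (\<Sum>a\<in>A. 3)" by (intro sum_mono) (simp add: card_insert_le_m1)
  finally show ?thesis by simp
qed

lemma card_dyadic_endpoints_le: "card (dyadic_endpoints K y) \<le> 2 * (K + 1)"
proof -
  have "card (dyadic_endpoints K y) \<le> (\<Sum>j\<le>K. card {dyadic_lo j y, dyadic_hi j y})"
    unfolding dyadic_endpoints_def by (rule card_UN_le) simp
  also have "\<dots> \<le> (\<Sum>j\<le>K. 2)" by (intro sum_mono) (simp add: card_insert_le_m1)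
  finally show ?thesis by simp
qed

lemma card_coarse_grid_le: "card (coarse_grid n K) \<le> n div 2^K + 2"
proof -
  have "{v. v < n \<and> 2^K dvd v} \<subseteq> (\<lambda>c. c * 2^K) ` {..n div 2^K}"
  proof
    fix v assume v: "v \<in> {v. v < n \<and> 2^K dvd v}"
    then obtain c where "v = c * 2^K" by (metis dvd_def mem_Collect_eq mult.commute)
    moreover have "c \<le> n div 2^K" using v div_le_mono[of v n "2^K"] \<open>v = c * 2^K\<close> by simp
    ultimately show "v \<in> (\<lambda>c. c * 2^K) ` {..n div 2^K}" by blast
  qed
  then have "card {v. v < n \<and> 2^K dvd v} \<le> card ((\<lambda>c. c * 2^K) ` {..n div 2^K})"
    by (intro card_mono) simp_all
  also have "\<dots> \<le> n div 2^K + 1"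
    using card_image_le[of "{..n div 2^K}" "\<lambda>c. c * 2^K"] by simp
  finally have "card {v. v < n \<and> 2^K dvd v} \<le> n div 2^K + 1" .
  then show ?thesis
    using card_Un_le[of "{v. v < n \<and> 2^K dvd v}" "{n - 1}"] by (simp add: coarse_grid_def)
qed

lemma card_query_set_le:
  assumes "finite X"
  shows "card (query_set n K X) \<le> 3 * (n div 2^K + 2 + 2 * (K + 1) * card X)"
proof -
  have "card (\<Union>x\<in>X. dyadic_endpoints K x \<inter> {..<n}) \<le> (\<Sum>x\<in>X. card (dyadic_endpoints K x \<inter> {..<n}))"
    by (rule card_UN_le[OF assms])
  also have "\<dots> \<le> (\<Sum>x\<in>X. 2 * (K + 1))"
    by (intro sum_mono order_trans[OF card_mono card_dyadic_endpoints_le])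
      (auto simp: dyadic_endpoints_def)
  finally have "card (\<Union>x\<in>X. dyadic_endpoints K x \<inter> {..<n}) \<le> 2 * (K + 1) * card X"
    by (simp add: mult.commute)
  moreover have "card (skeleton n K X)
      \<le> card (coarse_grid n K) + card (\<Union>x\<in>X. dyadic_endpoints K x \<inter> {..<n})"
    unfolding skeleton_def by (rule card_Un_le)
  ultimately have "card (skeleton n K X) \<le> n div 2^K + 2 + 2 * (K + 1) * card X"
    using card_coarse_grid_le[of n K] by linarith
  moreover have "finite (skeleton n K X)"
    unfolding skeleton_def coarse_grid_def by auto
  ultimately show ?thesis
    unfolding query_set_def using card_neighbourhood_le[of "skeleton n K X" n] by simp
qed

lemma query_complexity_convexity_tester:
  assumes "1 \<le> n" "real (min n (3 * (n div 2^K + 2 + 2 * (K + 1) * t))) \<le> q"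
  shows "query_complexity_le (convexity_tester n K t) q"
proof -
  have card_bound: "card (query_set n K (xs ` {..<t})) \<le> min n (3 * (n div 2^K + 2 + 2 * (K + 1) * t))"
    for xs
  proof -
    have "card (query_set n K (xs ` {..<t})) \<le> 3 * (n div 2^K + 2 + 2 * (K + 1) * card (xs ` {..<t}))"
      by (rule card_query_set_le) simp
    also have "\<dots> \<le> 3 * (n div 2^K + 2 + 2 * (K + 1) * t)"
      using mult_le_mono2[OF card_image_le[of "{..<t}" xs], of "2 * (K + 1)"] by simp
    finally show ?thesis
      using card_mono[OF _ query_set_subset] by simp
  qed
  have "real (card (query_set n K (xs ` {..<t}))) \<le> q" for xs
    by (rule order_trans[OF of_nat_mono[OF card_bound] assms(2)])
  then show ?thesis
    using assms(1) by (auto simp: query_complexity_le_def set_pmf_convexity_tester)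
qed

lemma level_le_ln:
  fixes x :: real
  assumes "2^K \<le> x"
  shows "real K \<le> 2 * ln x"
proof -
  have "0 < x" using assms by (metis order.strict_trans2 zero_less_numeral zero_less_power)
  have "real K * (2/3) \<le> real K * ln 2"
    using ln2_ge_two_thirds by (intro mult_left_mono) simp_all
  also have "\<dots> = ln (2^K)" by (simp add: ln_realpow)
  also have "\<dots> \<le> ln x" using assms \<open>0 < x\<close> by simp
  finally show ?thesis by simp
qed

lemma dyadic_level_query_bound:
  fixes \<epsilon> :: real
  assumes "0 < \<epsilon>" "\<epsilon> < 1" "real t \<le> 3 / \<epsilon>" "2^K \<le> \<epsilon> * real n" "\<epsilon> * real n < 2^(K+1)"
  shows "real (3 * (n div 2^K + 2 + 2 * (K + 1) * t)) \<le> 100 * max 1 (ln (\<epsilon> * real n)) / \<epsilon>"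
proof -
  define E where "E = 1 / \<epsilon>"
  define M where "M = max 1 (ln (\<epsilon> * real n))"
  have "1 \<le> E" "1 \<le> M" using assms(1,2) by (simp_all add: E_def M_def)
  have "real (n div 2^K) \<le> real n / 2^K" using of_nat_div_le_of_nat[of n "2^K"] by simp
  also have "\<dots> \<le> 2 * E"
    using assms(1,5) by (simp add: E_def field_simps)
  finally have "real (n div 2^K) \<le> 2 * E" .
  moreover have "real (K + 1) \<le> 3 * M"
    using level_le_ln[OF assms(4)] \<open>1 \<le> M\<close> by (simp add: M_def)
  then have "real (K + 1) * real t \<le> 3 * M * (3 * E)"
    using assms(3) by (intro mult_mono) (simp_all add: E_def)
  ultimately have "real (3 * (n div 2^K + 2 + 2 * (K + 1) * t)) \<le> 3 * (2 * E + 2 + 18 * (E * M))"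
    by (simp add: algebra_simps)
  also have "\<dots> \<le> 100 * (E * M)"
  proof -
    have "E \<le> E * M" using mult_left_mono[OF \<open>1 \<le> M\<close>, of E] \<open>1 \<le> E\<close> by simp
    then show ?thesis using \<open>1 \<le> E\<close> unfolding distrib_left by linarith
  qed
  finally show ?thesis by (simp add: E_def M_def)
qed

lemma ex_power_ivl1_real:
  fixes x :: real
  assumes "1 \<le> x"
  obtains K :: nat where "2^K \<le> x" "x < 2^(K+1)"
proof -
  have "1 \<le> nat \<lfloor>x\<rfloor>" using assms by linarith
  then obtain K where K: "2^K \<le> nat \<lfloor>x\<rfloor>" "nat \<lfloor>x\<rfloor> + 1 \<le> 2^(K+1)"
    using ex_power_ivl1[OF order_refl] by (metis Suc_eq_plus1 Suc_leI)
  have "real (nat \<lfloor>x\<rfloor>) = of_int \<lfloor>x\<rfloor>" using assms by simp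
  then have "(2::real)^K \<le> of_int \<lfloor>x\<rfloor>" "of_int \<lfloor>x\<rfloor> + 1 \<le> (2::real)^(K+1)"
    using of_nat_mono[OF K(1), where 'a=real] of_nat_mono[OF K(2), where 'a=real] by simp_all
  then have "2^K \<le> x" "x < 2^(K+1)"
    using of_int_floor_le[of x] real_of_int_floor_add_one_gt[of x] by linarith+
  then show ?thesis by (rule that)
qed

lemma exists_level_query_complexity:
  fixes \<epsilon> :: real
  assumes "1 \<le> n" "0 < \<epsilon>" "\<epsilon> < 1" "real t \<le> 3 / \<epsilon>"
  shows "\<exists>K. query_complexity_le (convexity_tester n K t) (100 * max 1 (ln (\<epsilon> * real n)) / \<epsilon>)"
proof (cases "1 \<le> \<epsilon> * real n")
  case True
  then obtain K where "2^K \<le> \<epsilon> * real n" "\<epsilon> * real n < 2^(K+1)"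
    by (rule ex_power_ivl1_real)
  then have "real (3 * (n div 2^K + 2 + 2 * (K + 1) * t)) \<le> 100 * max 1 (ln (\<epsilon> * real n)) / \<epsilon>"
    by (rule dyadic_level_query_bound[OF assms(2-4)])
  then have "real (min n (3 * (n div 2^K + 2 + 2 * (K + 1) * t))) \<le> 100 * max 1 (ln (\<epsilon> * real n)) / \<epsilon>"
    by (rule order_trans[rotated]) (rule of_nat_mono, rule min.cobounded2)
  then show ?thesis using query_complexity_convexity_tester[OF assms(1)] by blast
next
  case False
  then have "real n \<le> 100 * max 1 (ln (\<epsilon> * real n)) / \<epsilon>"
    using assms(2) by (simp add: field_simps)
  then have "real (min n (3 * (n div 2^0 + 2 + 2 * (0 + 1) * t))) \<le> 100 * max 1 (ln (\<epsilon> * real n)) / \<epsilon>"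
    by (rule order_trans[rotated]) simp
  then show ?thesis using query_complexity_convexity_tester[OF assms(1)] by blast
qed

theorem theorem1p1:
  shows "\<exists>C>0. \<forall>(n::nat) (\<epsilon>::real). n \<ge> 1 \<and> 0 < \<epsilon> \<and> \<epsilon> < 1 \<longrightarrow>
           (\<exists>T. one_sided_convexity_tester n \<epsilon> T \<and>
                query_complexity_le T (C * max 1 (ln (\<epsilon> * real n)) / \<epsilon>))"
proof (intro exI[of _ 100] conjI allI impI)
  fix n :: nat and \<epsilon> :: real
  assume "n \<ge> 1 \<and> 0 < \<epsilon> \<and> \<epsilon> < 1"
  then have n: "1 \<le> n" and \<epsilon>: "0 < \<epsilon>" "\<epsilon> < 1" by auto
  define t where "t = nat \<lceil>2 / \<epsilon>\<rceil>"
  have "real t = of_int \<lceil>2 / \<epsilon>\<rceil>" unfolding t_def using \<epsilon> by simp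
  then have "2 / \<epsilon> \<le> real t" "real t < 2 / \<epsilon> + 1" by linarith+
  then have "2 \<le> \<epsilon> * real t" "real t \<le> 3 / \<epsilon>"
    using \<epsilon> by (simp_all add: field_simps)
  obtain K where "query_complexity_le (convexity_tester n K t) (100 * max 1 (ln (\<epsilon> * real n)) / \<epsilon>)"
    using exists_level_query_complexity[OF n \<epsilon> \<open>real t \<le> 3 / \<epsilon>\<close>] by blast
  moreover have "one_sided_convexity_tester n \<epsilon> (convexity_tester n K t)"
    using n \<epsilon>(1) \<open>2 \<le> \<epsilon> * real t\<close> by (rule one_sided_convexity_tester_convexity_tester)
  ultimately show "\<exists>T. one_sided_convexity_tester n \<epsilon> T \<and>
      query_complexity_le T (100 * max 1 (ln (\<epsilon> * real n)) / \<epsilon>)" by blast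
qed simp

end
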